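(* Let $F[n,x]$ be a formula of ZF$\varepsilon$ with parameters, and let $G,U\in\Lambda$ satisfy $G\Vdash\forall n\,\neg\forall x\,\neg F[n,x]$ and $U\Vdash\forall f\,\neg\forall n^{\mathbb N}F[n,f[n]]$. Put $H=\Psi GU$. Let $k\in\mathbb N$ and $\phi\in\Lambda$ be such that for every $i<k$ there is a set $a_i$ with $\phi\underline i\Vdash F[i,a_i]$. If $H\underline k\,\phi\not\Vdash\bot$, then there exist a set $a_k$ and a term $\zeta_{k,\phi}\in\Lambda$ such that $\zeta_{k,\phi}\Vdash F[k,a_k]$ and $(H\underline k^+)(\chi)\underline k\,\phi\,\zeta_{k,\phi}\not\Vdash\bot$, where $\underline k^+=(\sigma)\underline k$.
   Context: Fix an integer $N\ge 0$. The set $\Lambda$ of terms is the smallest set containing the constants $B,C,I,K,W,cc,A$ and $p,q_0,\dots,q_N$, closed under application $(\xi)\eta$ (written $\xi\eta$), and containing, for each sequence $(\xi_i)_{i\in\mathbb N}$ of closed terms (no occurrence of $p,q_0,\dots,q_N$), a constant $\bigwedge_i\xi_i$ (injectively, well-founded). Stacks: finite sequences $t_0\cdot\ldots\cdot t_{n-1}\cdot\pi_0$ of terms, $\pi_0$ the empty stack; $\Pi$ the set of stacks. $\ell_t=((C)(B)CB)t$, $k_{\pi_0}=A$, $k_{t\cdot\pi}=(\ell_t)k_\pi$; $\sigma=(BW)(C)(B)BB$, $\underline0=(K)I$, $\underline{n+1}=(\sigma)\underline n$. Execution $\succ$: least preorder on $\Lambda\times\Pi$ with $(\xi)\eta\star\pi\succ\xi\star\eta\cdot\pi$;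 $B\star\xi\cdot\eta\cdot\zeta\cdot\pi\succ\xi\star(\eta)\zeta\cdot\pi$; $C\star\xi\cdot\eta\cdot\zeta\cdot\pi\succ\xi\star\zeta\cdot\eta\cdot\pi$; $I\star\xi\cdot\pi\succ\xi\star\pi$; $K\star\xi\cdot\eta\cdot\pi\succ\xi\star\pi$; $W\star\xi\cdot\eta\cdot\pi\succ\xi\star\eta\cdot\eta\cdot\pi$; $cc\star\xi\cdot\pi\succ\xi\star k_\pi\cdot\pi$; $A\star\xi\cdot\pi\succ\xi\star\pi_0$; $\bigwedge_i\xi_i\star\underline n\cdot\pi\succ\xi_n\star\pi$. Pole $\perp\!\!\!\perp=\{\xi\star\pi:\exists\varpi,\ \xi\star\pi\succ p\star\varpi\}$. $\lambda$-terms are translated into terms by the usual combinatory translation. Let $\mathbf0=\lambda x\lambda y\,y$, $\mathbf1=\lambda x\lambda y\,x$, $\mathsf a=\lambda x\lambda y\,yx$, $(i<k)=((k\mathsf a)\lambda d\,\mathbf0)(i\mathsf a)\lambda d\,\mathbf1$, $\chi=\lambda k\lambda f\lambda z\lambda i((i<k)(f)i)z$, $k^+=(\sigma)k$, $X=\lambda x\lambda f(f)(x)xf$, $Y=XX$, $\Psi=\lambda g\lambda u(Y)\lambda h\lambda k\lambda f(u)(\chi kf)(g)\lambda z(hk^+)(\chi)kfz$. Realizability is Krivine's classical realizability for ZF$\varepsilon$ over a ground model of ZF: $\xi\Vdash F$ iff $\xi\star\pi\in\perp\!\!\!\perp$ for all $\pi\in\|F\|$; $\|\bot\|=\Pi$,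 $\|A\to B\|=\{\eta\cdot\pi:\eta\Vdash A,\pi\in\|B\|\}$, $\|\forall xF[x]\|=\bigcup_a\|F[a]\|$, $\neg A$ is $A\to\bot$, $\|\forall n^{\mathbb N}F[n]\|=\{\underline n\cdot\pi:n\in\mathbb N,\pi\in\|F[n]\|\}$; $\xi\not\Vdash F$ means $\xi\Vdash F$ fails. $f[n]=\mathrm{app}(f,n)=\{y:(n,y)\in f\}$. *)

theory Defs
  imports Main
begin

text \<open>Constants B,C,I,K,W,cc,A, p, q_i (i \<le> N is enforced by wf_trm),
  application, and the constants \<And>_i xi_i for sequences of closed terms.\<close>

datatype trm = TB | TC | TI | TK | TW | Tcc | TA | Tp | Tq nat
  | App trm trm | Conj "nat \<Rightarrow> trm"

primrec closed_trm :: "trm \<Rightarrow> bool" where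
  "closed_trm TB = True"
| "closed_trm TC = True"
| "closed_trm TI = True"
| "closed_trm TK = True"
| "closed_trm TW = True"
| "closed_trm Tcc = True"
| "closed_trm TA = True"
| "closed_trm Tp = False"
| "closed_trm (Tq i) = False"
| "closed_trm (App s t) = (closed_trm s \<and> closed_trm t)"
| "closed_trm (Conj f) = (\<forall>i. closed_trm (f i))"

text \<open>Membership in Lambda (for the fixed N): q_i only for i \<le> N, and
  the constants \<And>_i xi_i only for sequences of closed terms.\<close>
primrec wf_trm :: "nat \<Rightarrow> trm \<Rightarrow> bool" where
  "wf_trm N TB = True"
| "wf_trm N TC = True"
| "wf_trm N TI = True"
| "wf_trm N TK = True"
| "wf_trm N TW = True"
| "wf_trm N Tcc = True"
| "wf_trm N TA = True"
| "wf_trm N Tp = True"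
| "wf_trm N (Tq i) = (i \<le> N)"
| "wf_trm N (App s t) = (wf_trm N s \<and> wf_trm N t)"
| "wf_trm N (Conj f) = (\<forall>i. closed_trm (f i) \<and> wf_trm N (f i))"

type_synonym stack = "trm list"

text \<open>The set Pi of stacks (over Lambda); the empty list is pi_0.\<close>
definition Stacks :: "nat \<Rightarrow> stack set" where
  "Stacks N = {\<pi>. \<forall>t\<in>set \<pi>. wf_trm N t}"

definition ell :: "trm \<Rightarrow> trm" where
  "ell t = App (App TC (App (App TB TC) TB)) t"

primrec kont :: "stack \<Rightarrow> trm" where
  "kont [] = TA"
| "kont (t # \<pi>) = App (ell t) (kont \<pi>)"

definition sigma :: trm where
  "sigma = App (App TB TW) (App TC (App (App TB TB) TB))"

primrec num :: "nat \<Rightarrow> trm" where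
  "num 0 = App TK TI"
| "num (Suc n) = App sigma (num n)"

inductive step :: "trm \<times> stack \<Rightarrow> trm \<times> stack \<Rightarrow> bool" where
  s_app: "step (App \<xi> \<eta>, \<pi>) (\<xi>, \<eta> # \<pi>)"
| s_B: "step (TB, \<xi> # \<eta> # \<zeta> # \<pi>) (\<xi>, App \<eta> \<zeta> # \<pi>)"
| s_C: "step (TC, \<xi> # \<eta> # \<zeta> # \<pi>) (\<xi>, \<zeta> # \<eta> # \<pi>)"
| s_I: "step (TI, \<xi> # \<pi>) (\<xi>, \<pi>)"
| s_K: "step (TK, \<xi> # \<eta> # \<pi>) (\<xi>, \<pi>)"
| s_W: "step (TW, \<xi> # \<eta> # \<pi>) (\<xi>, \<eta> # \<eta> # \<pi>)"
| s_cc: "step (Tcc, \<xi> # \<pi>) (\<xi>, kont \<pi> # \<pi>)"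
| s_A: "step (TA, \<xi> # \<pi>) (\<xi>, [])"
| s_Conj: "step (Conj f, num n # \<pi>) (f n, \<pi>)"

definition exec :: "trm \<times> stack \<Rightarrow> trm \<times> stack \<Rightarrow> bool" where
  "exec = step\<^sup>*\<^sup>*"

definition pole :: "(trm \<times> stack) set" where
  "pole = {(\<xi>, \<pi>). \<exists>\<rho>. exec (\<xi>, \<pi>) (Tp, \<rho>)}"

definition realizes :: "trm \<Rightarrow> stack set \<Rightarrow> bool" where
  "realizes \<xi> P \<longleftrightarrow> (\<forall>\<pi>\<in>P. (\<xi>, \<pi>) \<in> pole)"

definition fbot :: "nat \<Rightarrow> stack set" where
  "fbot N = Stacks N"

definition farrow :: "nat \<Rightarrow> stack set \<Rightarrow> stack set \<Rightarrow> stack set" where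
  "farrow N P Q = {\<eta> # \<pi> | \<eta> \<pi>. wf_trm N \<eta> \<and> realizes \<eta> P \<and> \<pi> \<in> Q}"

definition fneg :: "nat \<Rightarrow> stack set \<Rightarrow> stack set" where
  "fneg N P = farrow N P (fbot N)"

definition fall :: "('a \<Rightarrow> stack set) \<Rightarrow> stack set" where
  "fall P = (\<Union>a. P a)"

definition fall_nat :: "(nat \<Rightarrow> stack set) \<Rightarrow> stack set" where
  "fall_nat P = {num n # \<pi> | n \<pi>. \<pi> \<in> P n}"

datatype lam = V nat | Ap lam lam | Lam nat lam | Cst trm
datatype cterm = CV nat | CAp cterm cterm | CT trm

primrec cfv :: "cterm \<Rightarrow> nat set" where
  "cfv (CV x) = {x}"
| "cfv (CAp s t) = cfv s \<union> cfv t"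
| "cfv (CT c) = {}"

text \<open>Bracket abstraction (weak-head correct: [x]t \<star> u.pi reduces to a
  process realizability-equivalent to t[u/x] \<star> pi).\<close>
primrec brk :: "nat \<Rightarrow> cterm \<Rightarrow> cterm" where
  "brk x (CV y) = (if y = x then CT TI else CAp (CT TK) (CV y))"
| "brk x (CT c) = CAp (CT TK) (CT c)"
| "brk x (CAp s t) =
     (if x \<notin> cfv s \<and> x \<notin> cfv t then CAp (CT TK) (CAp s t)
      else if t = CV x \<and> x \<notin> cfv s then s
      else if x \<notin> cfv t then CAp (CAp (CT TC) (brk x s)) t
      else if x \<notin> cfv s then CAp (CAp (CT TB) s) (brk x t)
      else CAp (CT TW) (CAp (CAp (CT TB) (CAp (CAp (CT TC) (CT TB)) (brk x t))) (brk x s)))"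

primrec tr :: "lam \<Rightarrow> cterm" where
  "tr (V x) = CV x"
| "tr (Ap s t) = CAp (tr s) (tr t)"
| "tr (Lam x t) = brk x (tr t)"
| "tr (Cst c) = CT c"

primrec to_trm :: "cterm \<Rightarrow> trm" where
  "to_trm (CV x) = TI"  (* never used on closed lambda-terms *)
| "to_trm (CAp s t) = App (to_trm s) (to_trm t)"
| "to_trm (CT c) = c"

definition lterm :: "lam \<Rightarrow> trm" where
  "lterm t = to_trm (tr t)"

definition l0 :: lam where "l0 = Lam 0 (Lam 1 (V 1))"
definition l1 :: lam where "l1 = Lam 0 (Lam 1 (V 0))"
definition la :: lam where "la = Lam 0 (Lam 1 (Ap (V 1) (V 0)))"

definition lless :: "lam \<Rightarrow> lam \<Rightarrow> lam" where
  "lless i k = Ap (Ap (Ap k la) (Lam 2 l0)) (Ap (Ap i la) (Lam 2 l1))"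

definition lchi :: lam where
  "lchi = Lam 10 (Lam 11 (Lam 12 (Lam 13
            (Ap (Ap (lless (V 13) (V 10)) (Ap (V 11) (V 13))) (V 12)))))"

definition chi :: trm where "chi = lterm lchi"

definition lX :: lam where
  "lX = Lam 20 (Lam 21 (Ap (V 21) (Ap (Ap (V 20) (V 20)) (V 21))))"
definition lY :: lam where "lY = Ap lX lX"

text \<open>Psi = \<lambda>g\<lambda>u(Y)\<lambda>h\<lambda>k\<lambda>f(u)(\<chi>kf)(g)\<lambda>z(hk+)(\<chi>)kfz, with k+ = (sigma)k;
  variables g=30,u=31,h=32,k=33,f=34,z=35.\<close>
definition lPsi :: lam where
  "lPsi = Lam 30 (Lam 31 (Ap lY (Lam 32 (Lam 33 (Lam 34
     (Ap (V 31)
        (Ap (Ap (Ap lchi (V 33)) (V 34))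
            (Ap (V 30)
                (Lam 35 (Ap (Ap (V 32) (Ap (Cst sigma) (V 33)))
                            (Ap (Ap (Ap lchi (V 33)) (V 34)) (V 35))))))))))))"

definition Psi :: trm where "Psi = lterm lPsi"

text \<open>The only property of the ground-model operation app(f,n) = {y : (n,y) \<in> f}
  (together with the embedding of the integers as ground-model sets) that is
  relevant: every finite sequence of sets is of the form f[0],...,f[k-1].
  This holds in any model of ZF.\<close>
definition app_interpolates :: "(nat \<Rightarrow> 'a) \<Rightarrow> ('a \<Rightarrow> 'a \<Rightarrow> 'a) \<Rightarrow> bool" where
  "app_interpolates emb app \<longleftrightarrow>
     (\<forall>(a :: nat \<Rightarrow> 'a) k. \<exists>f. \<forall>i<k. app f (emb i) = a i)"

end

theory Submission
  imports Defs
begin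

text \<open>
  Write H = (Y)F with F = \<lambda>h\<lambda>k\<lambda>f (u)(\<chi>kf)(g)\<lambda>z(hk+)(\<chi>kfz). Running H k \<phi> unfolds the
  fixpoint once and reaches U with argument \<Xi> = (\<chi>k\<phi>)(G)\<theta>, where \<theta> = \<lambda>z (Hk+)(\<chi>k\<phi>z).
  If (Hk+)(\<chi>k\<phi>\<zeta>) realized \<bottom> for every realizer \<zeta> of every F[k,a], then \<theta> would realize
  \<forall>x \<not>F[k,x], so G \<theta> would be in the pole on every stack. As \<chi> makes \<Xi> run \<phi> n for n < k and
  G \<theta> otherwise, \<Xi> would realize \<forall>n F[n,f[n]] for any f with f[i] = a_i (i < k); then U \<Xi>,
  and with it H k \<phi>, would be in the pole on every stack, contradicting the hypothesis that H k \<phi> does not realize \<bottom>.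

  The H inside \<theta> is not literally H: the translation of the self-application x x reduces
  to (x)(I)x, so \<theta> runs into X with I X in place of X. Execution is deterministic and an
  I-padded copy of X behaves like X, so processes differing only by such padding are in the
  pole simultaneously.
\<close>

section \<open>Deterministic execution\<close>

fun step_fn :: "trm \<times> stack \<Rightarrow> (trm \<times> stack) option" where
  "step_fn (App \<xi> \<eta>, \<pi>) = Some (\<xi>, \<eta> # \<pi>)"
| "step_fn (TB, \<xi> # \<eta> # \<zeta> # \<pi>) = Some (\<xi>, App \<eta> \<zeta> # \<pi>)"
| "step_fn (TC, \<xi> # \<eta> # \<zeta> # \<pi>) = Some (\<xi>, \<zeta> # \<eta> # \<pi>)"
| "step_fn (TI, \<xi> # \<pi>) = Some (\<xi>, \<pi>)"
| "step_fn (TK, \<xi> # \<eta> # \<pi>) = Some (\<xi>, \<pi>)"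
| "step_fn (TW, \<xi> # \<eta> # \<pi>) = Some (\<xi>, \<eta> # \<eta> # \<pi>)"
| "step_fn _ = None"

lemma step_fn_step: "step_fn c = Some d \<Longrightarrow> step c d"
  by (induction c rule: step_fn.induct) (auto intro: step.intros)

lemma exec_refl: "exec c c"
  unfolding exec_def by simp

lemma exec_trans [trans]: "exec a b \<Longrightarrow> exec b c \<Longrightarrow> exec a c"
  unfolding exec_def by (rule rtranclp_trans)

lemma exec_stepI: "step c c' \<Longrightarrow> exec c' d \<Longrightarrow> exec c d"
  unfolding exec_def by (rule converse_rtranclp_into_rtranclp)

lemma exec_step_fnI: "step_fn c = Some c' \<Longrightarrow> exec c' d \<Longrightarrow> exec c d"
  by (rule exec_stepI[OF step_fn_step])

lemma num_inject: "num n = num m \<longleftrightarrow> n = m"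
proof (induction n arbitrary: m)
  case 0 then show ?case by (cases m) (auto simp: sigma_def)
next
  case (Suc n) then show ?case by (cases m) (auto simp: sigma_def)
qed

lemma step_deterministic: "step c d \<Longrightarrow> step c e \<Longrightarrow> d = e"
  by (induction rule: step.induct) (auto elim: step.cases simp: num_inject)

lemma exec_comparable: "exec c d \<Longrightarrow> exec c e \<Longrightarrow> exec d e \<or> exec e d"
  unfolding exec_def
proof (induction arbitrary: e rule: converse_rtranclp_induct)
  case base then show ?case by simp
next
  case (step c c')
  from step.prems show ?case
  proof (cases rule: converse_rtranclpE)
    case base then show ?thesis
      using step.hyps by (meson converse_rtranclp_into_rtranclp)
  next
    case (step c'')
    then have "c'' = c'" using step_deterministic \<open>step c c'\<close> by blast
    then show ?thesis using step.IH step by blast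
  qed
qed

lemma pole_closed_backward: "exec c d \<Longrightarrow> d \<in> pole \<Longrightarrow> c \<in> pole"
  unfolding pole_def by (auto intro: exec_trans)

lemma pole_closed_forward:
  assumes "exec c d" and "c \<in> pole"
  shows "d \<in> pole"
proof -
  obtain \<rho> where p: "exec c (Tp, \<rho>)" using \<open>c \<in> pole\<close> unfolding pole_def by auto
  have "d = (Tp, \<rho>)" if "exec (Tp, \<rho>) d"
    using that unfolding exec_def by (cases rule: converse_rtranclpE) (auto elim: step.cases)
  then show ?thesis
    using exec_comparable[OF \<open>exec c d\<close> p] unfolding pole_def by (auto intro: exec_refl)
qed

section \<open>Terms equal up to I-padding of X\<close>

definition X_comb :: trm where "X_comb = lterm lX"

inductive X_copy :: "trm \<Rightarrow> bool" where
  X_comb: "X_copy X_comb"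
| TI: "X_copy x \<Longrightarrow> X_copy (App TI x)"

lemma X_comb_eq: "X_comb = App (App TB TW) (App (App TC (App (App TB TB) (App (App TB (App TC TB))
    (App TW (App (App TB (App (App TC TB) TI)) TI))))) TI)"
  by (simp add: X_comb_def lterm_def lX_def)

lemma X_copy_exec: "X_copy x \<Longrightarrow> exec (x, \<pi>) (X_comb, \<pi>)"
proof (induction rule: X_copy.induct)
  case X_comb then show ?case by (rule exec_refl)
next
  case (TI x) show ?case by (rule exec_step_fnI, simp)+ (rule TI.IH)
qed

fun rigid :: "trm \<Rightarrow> bool" where
  "rigid (App a b) \<longleftrightarrow> App a b \<noteq> X_comb \<and> a \<noteq> TI \<and> rigid a \<and> rigid b"
| "rigid _ \<longleftrightarrow> True"

lemma rigid_not_X_copy: "rigid t \<Longrightarrow> \<not> X_copy t"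
  by (auto elim: X_copy.cases simp: X_comb_eq)

lemma rigid_num [simp]: "rigid (num n)"
  by (induction n) (auto simp: X_comb_eq sigma_def)

inductive X_equiv :: "trm \<Rightarrow> trm \<Rightarrow> bool" where
  refl: "X_equiv t t"
| App: "X_equiv a a' \<Longrightarrow> X_equiv b b' \<Longrightarrow> X_equiv (App a b) (App a' b')"
| X_copy: "X_copy x \<Longrightarrow> X_copy y \<Longrightarrow> X_equiv x y"

lemma X_equiv_rigid_iff [simp]: "rigid s \<Longrightarrow> X_equiv s t \<longleftrightarrow> t = s"
proof
  show "X_equiv s t \<Longrightarrow> rigid s \<Longrightarrow> t = s"
    by (induction rule: X_equiv.induct) (auto dest: rigid_not_X_copy)
qed (simp add: X_equiv.refl)

lemma X_equiv_X_copy: "X_equiv s t \<Longrightarrow> X_copy s \<Longrightarrow> X_copy t"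
proof (induction rule: X_equiv.induct)
  case (App a a' b b')
  from \<open>X_copy (App a b)\<close> consider "App a b = X_comb" | "a = TI" "X_copy b"
    by (cases rule: X_copy.cases) auto
  then show ?case
  proof cases
    case 1
    then have "rigid a" "rigid b" by (auto simp: X_comb_eq)
    then show ?thesis using 1 App.hyps X_copy.X_comb by simp
  next
    case 2
    then show ?thesis using App by (auto intro: X_copy.TI)
  qed
qed auto

lemma X_equiv_App:
  "X_equiv (App a b) t \<Longrightarrow> \<not> X_copy (App a b) \<Longrightarrow> \<exists>a' b'. t = App a' b' \<and> X_equiv a a' \<and> X_equiv b b'"
  by (cases rule: X_equiv.cases) (auto intro: X_equiv.refl)

lemma X_equiv_kont: "list_all2 X_equiv \<pi>1 \<pi>2 \<Longrightarrow> X_equiv (kont \<pi>1) (kont \<pi>2)"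
  by (induction rule: list_all2_induct) (auto simp: ell_def intro!: X_equiv.App X_equiv.refl)

definition X_equiv_proc :: "trm \<times> stack \<Rightarrow> trm \<times> stack \<Rightarrow> bool" where
  "X_equiv_proc c d \<longleftrightarrow> X_equiv (fst c) (fst d) \<and> list_all2 X_equiv (snd c) (snd d)"

lemma X_equiv_step:
  assumes "step (t1, \<pi>1) d1" "\<not> X_copy t1" "X_equiv t1 t2" "list_all2 X_equiv \<pi>1 \<pi>2"
  shows "\<exists>d2. step (t2, \<pi>2) d2 \<and> X_equiv_proc d1 d2"
  using assms(1)
proof cases
  case (s_app \<xi> \<eta>)
  then show ?thesis using assms(2-4)
    by (auto simp: X_equiv_proc_def dest!: X_equiv_App intro: step.intros)
qed (use assms(3,4) in \<open>auto simp: X_equiv_proc_def list_all2_Cons1;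
         blast intro: step.intros X_equiv.refl X_equiv.App X_equiv_kont\<close>)+

text \<open>The second case lets the left process perform the step of \<open>App TI x\<close> on its own.\<close>
definition X_sim :: "trm \<times> stack \<Rightarrow> trm \<times> stack \<Rightarrow> bool" where
  "X_sim c d \<longleftrightarrow> X_equiv_proc c d \<or> (\<exists>x \<pi>. c = (TI, x # \<pi>) \<and> X_equiv_proc (x, \<pi>) d)"

lemma X_sim_step:
  assumes "step c1 d1" and "X_sim c1 c2"
  shows "\<exists>d2. exec c2 d2 \<and> X_sim d1 d2"
proof -
  obtain t1 \<pi>1 t2 \<pi>2 where c: "c1 = (t1, \<pi>1)" "c2 = (t2, \<pi>2)" by force
  consider (pending) x \<pi> where "c1 = (TI, x # \<pi>)" "X_equiv_proc (x, \<pi>) c2"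
    | (equiv) "X_equiv t1 t2" "list_all2 X_equiv \<pi>1 \<pi>2"
    using \<open>X_sim c1 c2\<close> c by (auto simp: X_sim_def X_equiv_proc_def)
  then show ?thesis
  proof cases
    case pending
    then have "d1 = (x, \<pi>)"
      using \<open>step c1 d1\<close> step.s_I step_deterministic by blast
    then show ?thesis using pending exec_refl unfolding X_sim_def by blast
  next
    case equiv
    show ?thesis
    proof (cases "X_copy t1")
      case False
      then obtain d2 where "step c2 d2" "X_equiv_proc d1 d2"
        using X_equiv_step \<open>step c1 d1\<close> equiv c by blast
      then show ?thesis using exec_stepI exec_refl unfolding X_sim_def by blast
    next
      case True
      then have "X_copy t2" using equiv X_equiv_X_copy by blast
      from \<open>X_copy t1\<close> consider "t1 = X_comb" | y where "t1 = App TI y" "X_copy y"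
        by (cases rule: X_copy.cases) auto
      then show ?thesis
      proof cases
        case 1
        obtain a b where ab: "X_comb = App a b" by (simp add: X_comb_eq)
        then have d1: "d1 = (a, b # \<pi>1)"
          using \<open>step c1 d1\<close> c 1 step.s_app step_deterministic by metis
        have "exec (X_comb, \<pi>2) (a, b # \<pi>2)"
          unfolding ab by (rule exec_stepI[OF step.s_app exec_refl])
        then have "exec c2 (a, b # \<pi>2)"
          using exec_trans[OF X_copy_exec[OF \<open>X_copy t2\<close>]] c by simp
        then show ?thesis
          using d1 equiv by (auto simp: X_sim_def X_equiv_proc_def intro: X_equiv.refl)
      next
        case 2
        then have "d1 = (TI, y # \<pi>1)"
          using \<open>step c1 d1\<close> c step.s_app step_deterministic by blast
        then show ?thesis
          using 2 \<open>X_copy t2\<close> equiv c exec_refl by (auto simp: X_sim_def X_equiv_proc_def intro: X_equiv.X_copy)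
      qed
    qed
  qed
qed

lemma X_sim_pole:
  assumes "c1 \<in> pole" and "X_sim c1 c2"
  shows "c2 \<in> pole"
proof -
  obtain \<rho> where "exec c1 (Tp, \<rho>)" using \<open>c1 \<in> pole\<close> unfolding pole_def by blast
  then show ?thesis using \<open>X_sim c1 c2\<close> unfolding exec_def
  proof (induction arbitrary: c2 rule: converse_rtranclp_induct)
    case base
    then obtain \<rho>' where "c2 = (Tp, \<rho>')" by (cases c2) (auto simp: X_sim_def X_equiv_proc_def)
    then show ?case unfolding pole_def by (auto intro: exec_refl)
  next
    case (step c1 d1)
    then obtain d2 where "exec c2 d2" "X_sim d1 d2" using X_sim_step by blast
    then show ?case using step.IH pole_closed_backward by blast
  qed
qed

section \<open>Reduction of \<open>Psi\<close>\<close>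

lemma lterm_la [simp]: "lterm la = App TC TI"
  and lterm_zero_const [simp]: "lterm (Lam 2 l0) = App TK (App TK TI)"
  and lterm_one_const [simp]: "lterm (Lam 2 l1) = App TK TK"
  by (simp_all add: lterm_def la_def l0_def l1_def)

text \<open>The evaluation of (i<k), with \<open>A\<close> in the role of (i a)\<lambda>d 1.\<close>
lemma num_less_reduce:
  assumes "\<And>\<rho>. exec (A, \<rho>) (num i, lterm la # lterm (Lam 2 l1) # \<rho>)"
  shows "exec (num k, lterm la # lterm (Lam 2 l0) # A # X # Y # \<rho>) (if i < k then X else Y, \<rho>)"
  using assms
proof (induction k arbitrary: i A)
  case 0
  show ?case by (rule exec_step_fnI, simp)+ (simp add: exec_refl)
next
  case (Suc k)
  let ?A' = "App (App (num k) (lterm la)) (lterm (Lam 2 l0))"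
  have "exec (num (Suc k), lterm la # lterm (Lam 2 l0) # A # X # Y # \<rho>) (A, ?A' # X # Y # \<rho>)"
    by (rule exec_step_fnI, simp add: sigma_def)+ (simp add: exec_refl)
  also have "exec \<dots> (num i, lterm la # lterm (Lam 2 l1) # ?A' # X # Y # \<rho>)"
    by (rule Suc.prems)
  also have "exec \<dots> (if i < Suc k then X else Y, \<rho>)"
  proof (cases i)
    case 0
    show ?thesis unfolding 0 by (rule exec_step_fnI, simp)+ (simp add: exec_refl)
  next
    case (Suc j)
    let ?B = "App (App (num j) (lterm la)) (lterm (Lam 2 l1))"
    have "exec (num i, lterm la # lterm (Lam 2 l1) # ?A' # X # Y # \<rho>)
        (num k, lterm la # lterm (Lam 2 l0) # ?B # X # Y # \<rho>)"
      unfolding Suc by (rule exec_step_fnI, simp add: sigma_def)+ (simp add: exec_refl)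
    also have "exec \<dots> (if j < k then X else Y, \<rho>)"
      by (rule Suc.IH, (rule exec_step_fnI, simp)+) (simp add: exec_refl)
    finally show ?thesis using Suc by simp
  qed
  finally show ?case .
qed

lemma chi_eq: "chi = App (App TB (App TB TC))
      (App (App TB (App TB TW))
        (App (App TB (App TC (App (App TB TB) (App TC TB))))
          (App (App TC
                 (App (App TB TB)
                   (App (App TC (App (App TC TI) (App TC TI)))
                     (App TK (App TK TI)))))
            (App (App TC (App (App TC TI) (App TC TI))) (App TK TK)))))"
  by (simp add: chi_def lterm_def lchi_def lless_def la_def l0_def l1_def)

lemma chi_reduce:
  "exec (chi, num k # \<phi> # Z # num n # \<rho>) (if n < k then App \<phi> (num n) else Z, \<rho>)"
proof -
  let ?A = "App (App (App TC (App (App TC TI) (App TC TI))) (App TK TK)) (num n)"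
  have "exec (chi, num k # \<phi> # Z # num n # \<rho>)
      (num k, lterm la # lterm (Lam 2 l0) # ?A # App \<phi> (num n) # Z # \<rho>)"
    unfolding chi_eq by (rule exec_step_fnI, simp)+ (simp add: exec_refl)
  also have "exec \<dots> (if n < k then App \<phi> (num n) else Z, \<rho>)"
    by (rule num_less_reduce, (rule exec_step_fnI, simp)+) (simp add: exec_refl)
  finally show ?thesis .
qed

definition self_app :: trm where "self_app = lterm (Lam 0 (Ap (V 0) (V 0)))"

text \<open>
  Combinatory subterms of the translation of \<open>Psi\<close> (see \<open>Psi_eq\<close>). As \<lambda>-terms,
  PsiF g u = \<lambda>h\<lambda>k\<lambda>f (u)(PsiU g h k f), PsiU g h k f = (\<chi>kf)(PsiG g h k f),
  PsiG g h k f = (g)(PsiCont h k f) and PsiCont h k f = \<lambda>z (hk+)(\<chi>kfz).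
\<close>
definition PsiCont :: trm where
  "PsiCont = App (App TB TW) (App (App TB (App TB (App (App TC TB) chi)))
     (App (App TB (App TB TB)) (App (App TB (App TB TB)) (App (App TC TB) sigma))))"

definition PsiG :: trm where
  "PsiG = App (App TC (App (App TB TB) (App (App TB TB) TB))) PsiCont"

definition PsiU :: trm where
  "PsiU = App (App TB (App TB (App TB TW))) (App (App TB (App TB TW))
     (App (App TB (App TB (App TB (App (App TC TB) chi)))) (App (App TB (App TB (App TB TB)))
       (App (App TB (App TB (App TB (App TC TB)))) PsiG))))"

definition PsiF :: trm where
  "PsiF = App (App TB (App TC (App (App TB TB) (App (App TB TB) TB)))) PsiU"

lemma Psi_eq: "Psi = App (App TB (App TB (App X_comb X_comb))) PsiF"
  by (simp add: Psi_def lterm_def lPsi_def lchi_def lless_def lY_def lX_def la_def l0_def l1_def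
      X_comb_eq PsiF_def PsiU_def PsiG_def PsiCont_def chi_eq)

lemma Psi_reduce:
  "exec (App (App (App (App Psi G) U) K) \<phi>, \<pi>) (X_comb, X_comb # App (App PsiF G) U # K # \<phi> # \<pi>)"
  unfolding Psi_eq by (rule exec_step_fnI, simp)+ (rule exec_refl)

lemma X_comb_reduce: "exec (X_comb, x # M # \<pi>) (M, App (App self_app x) M # \<pi>)"
  unfolding X_comb_eq by (rule exec_step_fnI, simp)+ (simp add: self_app_def lterm_def exec_refl)

lemma self_app_reduce: "exec (App (App self_app x) M, \<pi>) (x, App TI x # M # \<pi>)"
  unfolding self_app_def lterm_def by (rule exec_step_fnI, simp)+ (rule exec_refl)

lemma PsiF_reduce:
  "exec (App (App PsiF G) U, T # K # \<phi> # \<pi>) (U, App (App (App (App PsiU G) T) K) \<phi> # \<pi>)"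
  unfolding PsiF_def by (rule exec_step_fnI, simp)+ (rule exec_refl)

lemma PsiU_reduce:
  "exec (App (App (App (App PsiU G) T) (num k)) \<phi>, num n # \<pi>)
     (if n < k then App \<phi> (num n) else App (App (App (App PsiG G) T) (num k)) \<phi>, \<pi>)"
proof -
  have "exec (App (App (App (App PsiU G) T) (num k)) \<phi>, num n # \<pi>)
      (chi, num k # \<phi> # App (App (App (App PsiG G) T) (num k)) \<phi> # num n # \<pi>)"
    unfolding PsiU_def by (rule exec_step_fnI, simp)+ (rule exec_refl)
  also have "exec \<dots> (if n < k then App \<phi> (num n) else App (App (App (App PsiG G) T) (num k)) \<phi>, \<pi>)"
    by (rule chi_reduce)
  finally show ?thesis .
qed

lemma PsiG_reduce:
  "exec (App (App (App (App PsiG G) T) K) \<phi>, \<pi>) (G, App (App (App PsiCont T) K) \<phi> # \<pi>)"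
  unfolding PsiG_def by (rule exec_step_fnI, simp)+ (rule exec_refl)

lemma PsiCont_reduce:
  "exec (App (App (App PsiCont T) K) \<phi>, \<zeta> # \<pi>) (T, App sigma K # App (App (App chi K) \<phi>) \<zeta> # \<pi>)"
  unfolding PsiCont_def by (rule exec_step_fnI, simp)+ (rule exec_refl)

lemma Psi_reduce_to_U:
  "exec (App (App (App (App Psi G) U) K) \<phi>, \<pi>)
     (U, App (App (App (App PsiU G) (App (App self_app X_comb) (App (App PsiF G) U))) K) \<phi> # \<pi>)"
  using Psi_reduce X_comb_reduce PsiF_reduce by (blast intro: exec_trans)

lemma PsiCont_reduce_to_X_comb:
  "exec (App (App (App PsiCont (App (App self_app X_comb) M)) K) \<phi>, \<zeta> # \<pi>)
     (X_comb, App TI X_comb # M # App sigma K # App (App (App chi K) \<phi>) \<zeta> # \<pi>)"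
  using PsiCont_reduce self_app_reduce by (blast intro: exec_trans)

lemma wf_trm_num: "wf_trm N (num n)"
  by (induction n) (simp_all add: sigma_def)

lemma wf_trm_Psi_parts:
  "wf_trm N X_comb" "wf_trm N self_app" "wf_trm N PsiCont" "wf_trm N PsiU" "wf_trm N PsiF"
  by (simp_all add: X_comb_eq self_app_def lterm_def PsiCont_def PsiG_def PsiU_def PsiF_def sigma_def chi_eq)

section \<open>Realizability\<close>

lemma realizes_fall: "realizes t (fall P) \<Longrightarrow> realizes t (P a)"
  by (auto simp: realizes_def fall_def)

lemma realizes_fneg_pole:
  "realizes t (fneg N P) \<Longrightarrow> wf_trm N s \<Longrightarrow> realizes s P \<Longrightarrow> \<rho> \<in> Stacks N \<Longrightarrow> (t, s # \<rho>) \<in> pole"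
  by (auto simp: realizes_def fneg_def farrow_def fbot_def)

lemma realizes_fall_fnegI:
  assumes "\<And>x s \<rho>. wf_trm N s \<Longrightarrow> realizes s (P x) \<Longrightarrow> \<rho> \<in> Stacks N \<Longrightarrow> (t, s # \<rho>) \<in> pole"
  shows "realizes t (fall (\<lambda>x. fneg N (P x)))"
  using assms by (auto simp: realizes_def fall_def fneg_def farrow_def fbot_def)

lemma realizes_fall_natI:
  assumes "\<And>n \<rho>. \<rho> \<in> Q n \<Longrightarrow> (t, num n # \<rho>) \<in> pole"
  shows "realizes t (fall_nat Q)"
  using assms by (auto simp: realizes_def fall_nat_def)

lemma PsiCont_realizes:
  assumes "\<And>\<zeta> x. wf_trm N \<zeta> \<Longrightarrow> realizes \<zeta> (P x) \<Longrightarrow>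
    realizes (App (App (App (App Psi G) U) (App sigma K)) (App (App (App chi K) \<phi>) \<zeta>)) (fbot N)"
  shows "realizes (App (App (App PsiCont (App (App self_app X_comb) (App (App PsiF G) U))) K) \<phi>)
    (fall (\<lambda>x. fneg N (P x)))"
proof (rule realizes_fall_fnegI)
  fix x \<zeta> \<rho>
  assume "wf_trm N \<zeta>" "realizes \<zeta> (P x)" "\<rho> \<in> Stacks N"
  let ?S = "App (App PsiF G) U # App sigma K # App (App (App chi K) \<phi>) \<zeta> # \<rho>"
  have "(App (App (App (App Psi G) U) (App sigma K)) (App (App (App chi K) \<phi>) \<zeta>), \<rho>) \<in> pole"
    using assms \<open>wf_trm N \<zeta>\<close> \<open>realizes \<zeta> (P x)\<close> \<open>\<rho> \<in> Stacks N\<close> by (auto simp: realizes_def fbot_def)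
  then have "(X_comb, X_comb # ?S) \<in> pole"
    by (rule pole_closed_forward[OF Psi_reduce])
  moreover have "X_equiv X_comb (App TI X_comb)"
    by (intro X_equiv.X_copy X_copy.intros)
  then have "X_sim (X_comb, X_comb # ?S) (X_comb, App TI X_comb # ?S)"
    by (simp add: X_sim_def X_equiv_proc_def X_equiv.refl list_all2_refl)
  ultimately have "(X_comb, App TI X_comb # ?S) \<in> pole"
    by (rule X_sim_pole)
  then show "(App (App (App PsiCont (App (App self_app X_comb) (App (App PsiF G) U))) K) \<phi>, \<zeta> # \<rho>) \<in> pole"
    by (rule pole_closed_backward[OF PsiCont_reduce_to_X_comb])
qed

lemma PsiU_realizes:
  assumes "\<And>n. n < k \<Longrightarrow> realizes (App \<phi> (num n)) (Q n)"
    and "\<And>n \<rho>. k \<le> n \<Longrightarrow> \<rho> \<in> Q n \<Longrightarrow> (G, App (App (App PsiCont T) (num k)) \<phi> # \<rho>) \<in> pole"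
  shows "realizes (App (App (App (App PsiU G) T) (num k)) \<phi>) (fall_nat Q)"
proof (rule realizes_fall_natI)
  fix n \<rho>
  assume "\<rho> \<in> Q n"
  have "(if n < k then App \<phi> (num n) else App (App (App (App PsiG G) T) (num k)) \<phi>, \<rho>) \<in> pole"
  proof (cases "n < k")
    case True
    then show ?thesis using assms(1) \<open>\<rho> \<in> Q n\<close> by (simp add: realizes_def)
  next
    case False
    then show ?thesis
      using assms(2)[of n \<rho>] \<open>\<rho> \<in> Q n\<close> pole_closed_backward[OF PsiG_reduce] by simp
  qed
  then show "(App (App (App (App PsiU G) T) (num k)) \<phi>, num n # \<rho>) \<in> pole"
    by (rule pole_closed_backward[OF PsiU_reduce])
qed

theorem lemma5:
  fixes N :: nat
    and Fv :: "'a \<Rightarrow> 'a \<Rightarrow> stack set"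
    and emb :: "nat \<Rightarrow> 'a"
    and app :: "'a \<Rightarrow> 'a \<Rightarrow> 'a"
    and G U \<phi> :: trm
    and k :: nat
  assumes Fv_stacks: "\<forall>n x. Fv n x \<subseteq> Stacks N"
    and app_ground: "app_interpolates emb app"
    and G_in: "wf_trm N G" and U_in: "wf_trm N U" and \<phi>_in: "wf_trm N \<phi>"
    and G_real: "realizes G (fall (\<lambda>n. fneg N (fall (\<lambda>x. fneg N (Fv n x)))))"
    and U_real: "realizes U (fall (\<lambda>f. fneg N (fall_nat (\<lambda>n. Fv (emb n) (app f (emb n))))))"
    and \<phi>_real: "\<forall>i<k. \<exists>a. realizes (App \<phi> (num i)) (Fv (emb i) a)"
    and nonbot: "\<not> realizes (App (App (App (App Psi G) U) (num k)) \<phi>) (fbot N)"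
  shows "\<exists>a \<zeta>. wf_trm N \<zeta> \<and> realizes \<zeta> (Fv (emb k) a) \<and>
           \<not> realizes (App (App (App (App Psi G) U) (App sigma (num k)))
                           (App (App (App chi (num k)) \<phi>) \<zeta>)) (fbot N)"
proof (rule ccontr)
  assume no_witness: "\<not> ?thesis"
  define T where "T = App (App self_app X_comb) (App (App PsiF G) U)"
  define \<theta> where "\<theta> = App (App (App PsiCont T) (num k)) \<phi>"
  define \<Xi> where "\<Xi> = App (App (App (App PsiU G) T) (num k)) \<phi>"
  have wf: "wf_trm N \<theta>" "wf_trm N \<Xi>"
    using G_in U_in \<phi>_in by (simp_all add: \<theta>_def \<Xi>_def T_def wf_trm_Psi_parts wf_trm_num)
  have "realizes \<theta> (fall (\<lambda>x. fneg N (Fv (emb k) x)))"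
    unfolding \<theta>_def T_def by (rule PsiCont_realizes) (use no_witness in blast)
  then have G_\<theta>: "(G, \<theta> # \<rho>) \<in> pole" if "\<rho> \<in> Stacks N" for \<rho>
    using realizes_fneg_pole[OF realizes_fall[OF G_real] wf(1)] that by blast
  obtain a where a: "\<forall>i<k. realizes (App \<phi> (num i)) (Fv (emb i) (a i))"
    using \<phi>_real by metis
  obtain f where f: "\<forall>i<k. app f (emb i) = a i"
    using app_ground unfolding app_interpolates_def by blast
  have "realizes \<Xi> (fall_nat (\<lambda>n. Fv (emb n) (app f (emb n))))"
    unfolding \<Xi>_def using a f G_\<theta>[unfolded \<theta>_def] Fv_stacks by (intro PsiU_realizes) (auto simp: subset_iff)
  moreover obtain \<pi> where "\<pi> \<in> Stacks N" "(App (App (App (App Psi G) U) (num k)) \<phi>, \<pi>) \<notin> pole"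
    using nonbot unfolding realizes_def fbot_def by blast
  ultimately have "(U, \<Xi> # \<pi>) \<in> pole"
    using realizes_fneg_pole[OF realizes_fall[OF U_real] wf(2)] by blast
  then show False
    using pole_closed_backward[OF Psi_reduce_to_U] \<open>(_, \<pi>) \<notin> pole\<close> unfolding \<Xi>_def T_def by blast
qed

end
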